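(* Consider the setting and the algorithm described in the context, run with $\varrho\in(0,1)$. For each $k\in\mathbb{N}$, $\|y^k-\bar x^k\|\le a_2^{-1}\eta(1+\|G_k\|)[r(x^k)]^{1+\tau-\varrho}$, where $\bar x^k$ is the unique minimizer of $\Theta_k$.
   Context: Let $A\in\mathbb{R}^{m\times n}$, $b\in\mathbb{R}^m$, and let $\psi:\mathbb{R}^m\to(-\infty,\infty]$ and $g:\mathbb{R}^n\to(-\infty,\infty]$ be proper lower semicontinuous functions. Set $f(x):=\psi(Ax-b)$ and $F:=f+g$. Assume: (i) there is an open set $\mathcal{O}\supseteq\mathrm{dom}\,g$ such that $\psi$ is twice continuously differentiable on $A(\mathcal{O})-b$; (ii) $g$ is convex and continuous relative to $\mathrm{dom}\,g$; (iii) $\inf F>-\infty$ and $F$ is level bounded. Let $\mathcal{P}g(x):=\arg\min_z\{\frac12\|z-x\|^2+g(z)\}$, $R(x):=x-\mathcal{P}g(x-\nabla f(x))$, $r(x):=\|R(x)\|$. Write $[a]_+=\max(0,a)$, $\lambda_{\min}$ for the smallest eigenvalue, $\|G\|$ for the spectral norm. Algorithm: parameters $a_1\ge1$, $a_2>0$, $\varrho\in[0,1)$, $\tau\ge\varrho$, $\eta,\beta,\sigma\in(0,1)$, $x^0\in\mathrm{dom}\,g$. At iteration $k$: $\mu_k:=a_2[r(x^k)]^{\varrho}$, $G_k:=\nabla^2 f(x^k)+a_1[-\lambda_{\min}(\nabla^2\psi(Ax^k-b))]_+A^\top A+\mu_kI$, $\Theta_k(x):=f(x^k)+\langle\nabla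 f(x^k),x-x^k\rangle+\frac12(x-x^k)^\top G_k(x-x^k)+g(x)$, $r_k(y):=\|y-\mathcal{P}g(y-\nabla f(x^k)-G_k(y-x^k))\|$. Choose $y^k\in\mathrm{dom}\,g$ with $\Theta_k(y^k)\le\Theta_k(x^k)$ and, if $\varrho\in(0,1)$, $r_k(y^k)\le\eta\min\{r(x^k),[r(x^k)]^{1+\tau}\}$; if $\varrho=0$, $\mathrm{dist}(0,\partial\Theta_k(y^k))\le\eta\, r(x^k)$. Set $d^k:=y^k-x^k$; let $m_k$ be the smallest nonnegative integer $m$ with $F(x^k)-F(x^k+\beta^md^k)\ge\sigma\beta^m\mu_k\|d^k\|^2$, $\alpha_k:=\beta^{m_k}$, and $x^{k+1}:=y^k$ if $F(y^k)<F(x^k+\alpha_kd^k)$, otherwise $x^{k+1}:=x^k+\alpha_kd^k$. The method stops when $x^k$ is stationary or $d^k=0$; the "generated sequence" refers to the infinite sequence produced when this does not occur (so $r(x^k)>0$ and $G_k$ is positive definite for all $k$). *)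

theory Defs
  imports "HOL-Analysis.Analysis"
begin

definition lsc :: "('a::metric_space \<Rightarrow> ereal) \<Rightarrow> bool" where
  "lsc h \<longleftrightarrow> (\<forall>x X. X \<longlonglongrightarrow> x \<longrightarrow> h x \<le> liminf (\<lambda>k. h (X k)))"

definition proper :: "('a \<Rightarrow> ereal) \<Rightarrow> bool" where
  "proper h \<longleftrightarrow> (\<forall>x. h x \<noteq> -\<infinity>) \<and> (\<exists>x. h x \<noteq> \<infinity>)"

definition edom :: "('a \<Rightarrow> ereal) \<Rightarrow> 'a set" where
  "edom h = {x. h x < \<infinity>}"

definition grad :: "(real^'n \<Rightarrow> real) \<Rightarrow> real^'n \<Rightarrow> real^'n" where
  "grad h x = (\<chi> i. frechet_derivative h (at x) (axis i 1))"

definition hess :: "(real^'n \<Rightarrow> real) \<Rightarrow> real^'n \<Rightarrow> real^'n^'n" where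
  "hess h x = (\<chi> i j. frechet_derivative (\<lambda>y. grad h y $ i) (at x) (axis j 1))"

definition C2_on :: "(real^'n) set \<Rightarrow> (real^'n \<Rightarrow> real) \<Rightarrow> bool" where
  "C2_on V h \<longleftrightarrow> (\<forall>u\<in>V. h differentiable (at u)) \<and>
     (\<forall>u\<in>V. \<forall>i. (\<lambda>y. grad h y $ i) differentiable (at u)) \<and>
     continuous_on V (hess h)"

definition lambda_min :: "real^'n^'n \<Rightarrow> real" where
  "lambda_min M = Min {l. \<exists>v. v \<noteq> 0 \<and> M *v v = l *\<^sub>R v}"

definition spec_norm :: "real^'n^'m \<Rightarrow> real" where
  "spec_norm M = onorm (\<lambda>v. M *v v)"

text \<open>Proximal mapping of g (the unique minimiser, g proper lsc convex).\<close>
definition prox :: "(real^'n \<Rightarrow> ereal) \<Rightarrow> real^'n \<Rightarrow> real^'n" where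
  "prox g x = (THE z. \<forall>w. ereal (1/2 * (norm (z - x))\<^sup>2) + g z \<le> ereal (1/2 * (norm (w - x))\<^sup>2) + g w)"

text \<open>f(x) = psi(Ax - b); real version used for derivatives (psi is finite near dom g).\<close>
definition fobj :: "real^'n^'m \<Rightarrow> real^'m \<Rightarrow> (real^'m \<Rightarrow> ereal) \<Rightarrow> real^'n \<Rightarrow> ereal" where
  "fobj A b psi x = psi (A *v x - b)"

definition freal :: "real^'n^'m \<Rightarrow> real^'m \<Rightarrow> (real^'m \<Rightarrow> ereal) \<Rightarrow> real^'n \<Rightarrow> real" where
  "freal A b psi x = real_of_ereal (psi (A *v x - b))"

definition Fobj :: "real^'n^'m \<Rightarrow> real^'m \<Rightarrow> (real^'m \<Rightarrow> ereal) \<Rightarrow> (real^'n \<Rightarrow> ereal) \<Rightarrow> real^'n \<Rightarrow> ereal" where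
  "Fobj A b psi g x = fobj A b psi x + g x"

definition resid :: "real^'n^'m \<Rightarrow> real^'m \<Rightarrow> (real^'m \<Rightarrow> ereal) \<Rightarrow> (real^'n \<Rightarrow> ereal) \<Rightarrow> real^'n \<Rightarrow> real" where
  "resid A b psi g x = norm (x - prox g (x - grad (freal A b psi) x))"

definition mu :: "real^'n^'m \<Rightarrow> real^'m \<Rightarrow> (real^'m \<Rightarrow> ereal) \<Rightarrow> (real^'n \<Rightarrow> ereal) \<Rightarrow> real \<Rightarrow> real \<Rightarrow> real^'n \<Rightarrow> real" where
  "mu A b psi g a2 \<rho> xk = a2 * (resid A b psi g xk) powr \<rho>"

definition Gmat :: "real^'n^'m \<Rightarrow> real^'m \<Rightarrow> (real^'m \<Rightarrow> ereal) \<Rightarrow> (real^'n \<Rightarrow> ereal) \<Rightarrow> real \<Rightarrow> real \<Rightarrow> real \<Rightarrow> real^'n \<Rightarrow> real^'n^'n" where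
  "Gmat A b psi g a1 a2 \<rho> xk =
     hess (freal A b psi) xk
     + (a1 * max 0 (- lambda_min (hess (\<lambda>u. real_of_ereal (psi u)) (A *v xk - b)))) *\<^sub>R (transpose A ** A)
     + mu A b psi g a2 \<rho> xk *\<^sub>R mat 1"

definition Theta :: "real^'n^'m \<Rightarrow> real^'m \<Rightarrow> (real^'m \<Rightarrow> ereal) \<Rightarrow> (real^'n \<Rightarrow> ereal) \<Rightarrow> real \<Rightarrow> real \<Rightarrow> real \<Rightarrow> real^'n \<Rightarrow> real^'n \<Rightarrow> ereal" where
  "Theta A b psi g a1 a2 \<rho> xk x =
     ereal (freal A b psi xk + grad (freal A b psi) xk \<bullet> (x - xk)
            + 1/2 * ((x - xk) \<bullet> (Gmat A b psi g a1 a2 \<rho> xk *v (x - xk)))) + g x"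

definition rk :: "real^'n^'m \<Rightarrow> real^'m \<Rightarrow> (real^'m \<Rightarrow> ereal) \<Rightarrow> (real^'n \<Rightarrow> ereal) \<Rightarrow> real \<Rightarrow> real \<Rightarrow> real \<Rightarrow> real^'n \<Rightarrow> real^'n \<Rightarrow> real" where
  "rk A b psi g a1 a2 \<rho> xk y =
     norm (y - prox g (y - grad (freal A b psi) xk - Gmat A b psi g a1 a2 \<rho> xk *v (y - xk)))"

definition generated_seq ::
  "real^'n^'m \<Rightarrow> real^'m \<Rightarrow> (real^'m \<Rightarrow> ereal) \<Rightarrow> (real^'n \<Rightarrow> ereal) \<Rightarrow>
   real \<Rightarrow> real \<Rightarrow> real \<Rightarrow> real \<Rightarrow> real \<Rightarrow> real \<Rightarrow> real \<Rightarrow>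
   (nat \<Rightarrow> real^'n) \<Rightarrow> (nat \<Rightarrow> real^'n) \<Rightarrow> bool" where
  "generated_seq A b psi g a1 a2 \<rho> \<tau> \<eta> \<beta> \<sigma> x y \<longleftrightarrow>
     x 0 \<in> edom g \<and>
     (\<forall>k. resid A b psi g (x k) > 0 \<and> y k \<noteq> x k) \<and>
     (\<forall>k. y k \<in> edom g
        \<and> Theta A b psi g a1 a2 \<rho> (x k) (y k) \<le> Theta A b psi g a1 a2 \<rho> (x k) (x k)
        \<and> rk A b psi g a1 a2 \<rho> (x k) (y k)
            \<le> \<eta> * min (resid A b psi g (x k)) ((resid A b psi g (x k)) powr (1 + \<tau>))) \<and>
     (\<forall>k. let d = y k - x k;
             m = (LEAST m::nat. Fobj A b psi g (x k + (\<beta> ^ m) *\<^sub>R d)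
                     + ereal (\<sigma> * \<beta> ^ m * mu A b psi g a2 \<rho> (x k) * (norm d)\<^sup>2)
                   \<le> Fobj A b psi g (x k));
             \<alpha> = \<beta> ^ m
         in x (Suc k) = (if Fobj A b psi g (y k) < Fobj A b psi g (x k + \<alpha> *\<^sub>R d)
                         then y k else x k + \<alpha> *\<^sub>R d))"

end

(*
  G_k is symmetric, because the Hessian of psi is (Schwarz), and G_k >= mu_k I, because the term
  a1 [-lambda_min (Hess psi)]_+ A^T A dominates the negative curvature of Hess f = A^T (Hess psi) A.
  Hence Theta_k, a quadratic with this matrix plus the convex g, is strongly convex and has a unique
  minimiser xb.  Adding the optimality conditions of xb and of the proximal point
  p = prox_g (y^k - grad f(x^k) - G_k (y^k - x^k)), the values of g cancel and
  mu_k |y^k - xb|^2 <= (1 + |G_k|) |y^k - p| |y^k - xb|.  Since |y^k - p| = r_k(y^k) <= eta r(x^k)^(1+tau)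
  and mu_k = a2 r(x^k)^rho, this is the claim.
*)
theory Submission
  imports Defs
begin

section \<open>Symmetric matrices and the smallest eigenvalue\<close>

lemma inner_matrix_symmetric:
  fixes M :: "real^'n^'n"
  assumes "Finite_Cartesian_Product.transpose M = M"
  shows "x \<bullet> (M *v y) = (M *v x) \<bullet> y"
  by (metis assms dot_lmul_matrix vector_transpose_matrix)

lemma transpose_add_matrix:
  fixes X Y :: "real^'n^'m"
  shows "Finite_Cartesian_Product.transpose (X + Y)
    = Finite_Cartesian_Product.transpose X + Finite_Cartesian_Product.transpose Y"
  by (simp add: vec_eq_iff transpose_def)

lemma le_0_if_le_mult_near_0:
  fixes c K :: real
  assumes "\<And>t. 0 < t \<Longrightarrow> t \<le> 1 \<Longrightarrow> c \<le> t * K"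
  shows "c \<le> 0"
proof -
  have "((\<lambda>t. t * K) \<longlongrightarrow> 0) (at_right 0)"
    by (auto intro!: tendsto_eq_intros)
  moreover have "\<forall>\<^sub>F t in at_right 0. c \<le> t * K"
    unfolding eventually_at_right_field using assms by (intro exI[of _ 1]) auto
  ultimately show ?thesis
    by (rule tendsto_lowerbound) simp
qed

lemma symmetric_quadratic_form_min_eigenvector:
  fixes H :: "real^'n^'n"
  assumes symH: "Finite_Cartesian_Product.transpose H = H"
    and ge: "\<And>v. l * (norm v)\<^sup>2 \<le> v \<bullet> (H *v v)"
    and eq: "v0 \<bullet> (H *v v0) = l * (norm v0)\<^sup>2"
  shows "H *v v0 = l *\<^sub>R v0"
proof -
  define w where "w = H *v v0 - l *\<^sub>R v0"
  define K where "K = w \<bullet> (H *v w) - l * (norm w)\<^sup>2"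
  have "2 * (norm w)\<^sup>2 \<le> t * K" if "0 < t" for t
  proof -
    have "w \<bullet> (H *v v0) = (H *v w) \<bullet> v0"
      using inner_matrix_symmetric[OF symH] by simp
    then have "(v0 - t *\<^sub>R w) \<bullet> (H *v (v0 - t *\<^sub>R w)) - l * (norm (v0 - t *\<^sub>R w))\<^sup>2
        = t * (t * K - 2 * (norm w)\<^sup>2)"
      using eq unfolding K_def w_def power2_norm_eq_inner
      by (simp add: inner_commute algebra_simps)
    moreover have "0 \<le> (v0 - t *\<^sub>R w) \<bullet> (H *v (v0 - t *\<^sub>R w)) - l * (norm (v0 - t *\<^sub>R w))\<^sup>2"
      using ge by simp
    ultimately show ?thesis
      using that by (simp add: zero_le_mult_iff)
  qed
  then have "2 * (norm w)\<^sup>2 \<le> 0"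
    by (intro le_0_if_le_mult_near_0[of _ K]) simp
  then show ?thesis
    by (simp add: w_def)
qed

lemma orthogonal_eigenvectors_symmetric:
  fixes H :: "real^'n^'n"
  assumes symH: "Finite_Cartesian_Product.transpose H = H"
    and u: "H *v u = l *\<^sub>R u" and u': "H *v u' = l' *\<^sub>R u'" and "l \<noteq> l'"
  shows "orthogonal u u'"
proof -
  have "l * (u \<bullet> u') = u \<bullet> (H *v u')"
    using u inner_matrix_symmetric[OF symH, of u u'] by simp
  also have "\<dots> = l' * (u \<bullet> u')"
    using u' by simp
  finally show ?thesis
    using \<open>l \<noteq> l'\<close> by (simp add: orthogonal_def)
qed

lemma finite_eigenvalues_symmetric:
  fixes H :: "real^'n^'n"
  assumes symH: "Finite_Cartesian_Product.transpose H = H"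
  shows "finite {l. \<exists>v. v \<noteq> 0 \<and> H *v v = l *\<^sub>R v}" (is "finite ?E")
proof -
  define ev where "ev l = (SOME v. v \<noteq> 0 \<and> H *v v = l *\<^sub>R v)" for l
  have ev: "ev l \<noteq> 0 \<and> H *v ev l = l *\<^sub>R ev l" if "l \<in> ?E" for l
    using that unfolding ev_def by (metis (mono_tags, lifting) mem_Collect_eq someI_ex)
  have "inj_on ev ?E"
  proof (rule inj_onI)
    fix l l' assume E: "l \<in> ?E" "l' \<in> ?E" and same: "ev l = ev l'"
    have "l *\<^sub>R ev l = l' *\<^sub>R ev l"
      using ev[OF E(1)] ev[OF E(2)] unfolding same by simp
    then show "l = l'"
      using ev[OF E(1)] by simp
  qed
  have orth: "orthogonal (ev l) (ev l')" if "l \<in> ?E" "l' \<in> ?E" and "l \<noteq> l'" for l l'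
    using ev that by (blast intro: orthogonal_eigenvectors_symmetric[OF symH])
  have "pairwise orthogonal (ev ` ?E)"
  proof (rule pairwiseI)
    fix u u' assume "u \<in> ev ` ?E" "u' \<in> ev ` ?E" "u \<noteq> u'"
    then show "orthogonal u u'"
      using orth by blast
  qed
  moreover have "0 \<notin> ev ` ?E"
  proof (rule notI, erule imageE)
    fix l assume "0 = ev l" and E: "l \<in> ?E"
    with ev[OF E] show False
      by simp
  qed
  ultimately have "independent (ev ` ?E)"
    by (rule pairwise_orthogonal_independent)
  then have "finite (ev ` ?E)"
    using independent_bound by blast
  then show ?thesis
    using \<open>inj_on ev ?E\<close> by (rule finite_imageD)
qed

(* The minimiser of the Rayleigh quotient is an eigenvector, so the Min in lambda_min is over a nonempty set. *)
lemma lambda_min_le_quadratic_form: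
  fixes H :: "real^'n^'n"
  assumes symH: "Finite_Cartesian_Product.transpose H = H"
  shows "lambda_min H * (norm v)\<^sup>2 \<le> v \<bullet> (H *v v)"
proof -
  have "axis undefined 1 \<in> sphere (0::real^'n) 1"
    by simp
  moreover have "continuous_on (sphere 0 1) (\<lambda>u. u \<bullet> (H *v u))"
    by (intro continuous_intros matrix_vector_mult_linear_continuous_on)
  ultimately obtain v0 where "v0 \<in> sphere 0 1"
    and "\<And>u. u \<in> sphere 0 1 \<Longrightarrow> v0 \<bullet> (H *v v0) \<le> u \<bullet> (H *v u)"
    using continuous_attains_inf[OF compact_sphere] by blast
  then have v0: "norm v0 = 1" and min: "\<And>u. norm u = 1 \<Longrightarrow> v0 \<bullet> (H *v v0) \<le> u \<bullet> (H *v u)"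
    by auto
  define l where "l = v0 \<bullet> (H *v v0)"
  have ge: "l * (norm u)\<^sup>2 \<le> u \<bullet> (H *v u)" for u
  proof (cases "u = 0")
    case False
    then have "l \<le> (u /\<^sub>R norm u) \<bullet> (H *v (u /\<^sub>R norm u))"
      unfolding l_def by (intro min) simp
    also have "\<dots> = (u \<bullet> (H *v u)) / (norm u)\<^sup>2"
      by (simp add: matrix_vector_mult_scaleR power2_eq_square field_simps)
    finally show ?thesis
      using False by (simp add: field_simps)
  qed simp
  have "H *v v0 = l *\<^sub>R v0"
    by (rule symmetric_quadratic_form_min_eigenvector[OF symH ge]) (simp add: l_def v0)
  moreover have "v0 \<noteq> 0"
    using v0 by auto
  ultimately have "lambda_min H \<le> l"
    unfolding lambda_min_def by (blast intro: Min_le finite_eigenvalues_symmetric[OF symH])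
  then have "lambda_min H * (norm v)\<^sup>2 \<le> l * (norm v)\<^sup>2"
    by (simp add: mult_right_mono)
  with ge[of v] show ?thesis
    by linarith
qed

section \<open>Symmetry of the Hessian\<close>

(*
  C2_on only provides differentiability of psi on A(U) - b, which need not be open, so Schwarz's
  theorem cannot be used on a neighbourhood.  But where h is not differentiable, grad h takes the
  fixed junk value of the choice operator; a gradient component with a nonzero directional derivative
  at u0 avoids every fixed value on a thin cone at u0, so h is differentiable on that cone, and the
  mixed second differences are compared on small squares inside it.
*)
lemma grad_not_differentiable:
  fixes h :: "real^'n \<Rightarrow> real"
  shows "\<not> h differentiable (at u) \<Longrightarrow> grad h u = (\<chi> i. (SOME D :: real^'n \<Rightarrow> real. False) (axis i 1))"
  unfolding grad_def frechet_derivative_def differentiable_def by simp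

lemma linear_lower_bound_in_cone:
  fixes L :: "'a::real_normed_vector \<Rightarrow> real"
  assumes L: "bounded_linear L" and Lv: "L v \<noteq> 0"
  obtains \<epsilon> where "0 < \<epsilon>" "\<epsilon> \<le> 1"
    "\<And>r w. 0 < r \<Longrightarrow> norm w \<le> \<epsilon> * r \<Longrightarrow> r * \<bar>L v\<bar> / 2 \<le> \<bar>L (r *\<^sub>R v + w)\<bar>"
proof -
  obtain M where M: "M > 0" "\<And>x. norm (L x) \<le> norm x * M"
    using bounded_linear.pos_bounded[OF L] by blast
  define \<epsilon> where "\<epsilon> = min 1 (\<bar>L v\<bar> / (2 * M))"
  have \<epsilon>: "0 < \<epsilon>" "\<epsilon> \<le> 1" "\<epsilon> * M \<le> \<bar>L v\<bar> / 2"
    using Lv M by (auto simp: \<epsilon>_def min_def field_simps)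
  show ?thesis
  proof (rule that[OF \<epsilon>(1,2)])
    fix r and w :: 'a
    assume r: "0 < r" and w: "norm w \<le> \<epsilon> * r"
    have "\<bar>L w\<bar> \<le> \<epsilon> * r * M"
      using M(2)[of w] w M(1) by (simp add: mult_right_mono order_trans)
    also have "\<dots> \<le> r * \<bar>L v\<bar> / 2"
      using mult_left_mono[OF \<epsilon>(3), of r] r by (simp add: algebra_simps)
    finally have "\<bar>L w\<bar> \<le> r * \<bar>L v\<bar> / 2" .
    moreover have "L (r *\<^sub>R v + w) = r * L v + L w"
      using bounded_linear.linear[OF L] by (simp add: linear_add linear_scale)
    moreover have "\<bar>r * L v\<bar> = r * \<bar>L v\<bar>"
      using r by (simp add: abs_mult)
    ultimately show "r * \<bar>L v\<bar> / 2 \<le> \<bar>L (r *\<^sub>R v + w)\<bar>"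
      by arith
  qed
qed

lemma norm_le_in_cone:
  fixes u u0 v :: "'a::real_normed_vector"
  assumes "\<epsilon> \<le> 1" "0 < r" "norm (u - (u0 + r *\<^sub>R v)) \<le> \<epsilon> * r"
  shows "norm (u - u0) \<le> r * (norm v + 1)"
proof -
  have "\<epsilon> * r \<le> r"
    using assms(1,2) by (simp add: mult_le_cancel_right1)
  moreover have "norm (u - u0) \<le> norm (r *\<^sub>R v) + norm (u - (u0 + r *\<^sub>R v))"
    using norm_triangle_ineq[of "r *\<^sub>R v" "u - (u0 + r *\<^sub>R v)"] by simp
  moreover have "norm (r *\<^sub>R v) = r * norm v"
    using assms(2) by simp
  ultimately have "norm (u - u0) \<le> r * norm v + r"
    using assms(3) by linarith
  then show ?thesis
    by (simp add: algebra_simps)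
qed

lemma has_derivative_ne_in_cone:
  fixes F :: "'a::real_normed_vector \<Rightarrow> real"
  assumes F: "(F has_derivative L) (at u0)" and Lv: "L v \<noteq> 0"
  obtains \<epsilon> \<delta> where "0 < \<epsilon>" "\<epsilon> \<le> 1" "0 < \<delta>"
    "\<And>r u. 0 < r \<Longrightarrow> r < \<delta> \<Longrightarrow> norm (u - (u0 + r *\<^sub>R v)) \<le> \<epsilon> * r \<Longrightarrow> F u \<noteq> F u0"
proof -
  have L: "bounded_linear L"
    using F by (rule has_derivative_bounded_linear)
  obtain \<epsilon> where \<epsilon>: "0 < \<epsilon>" "\<epsilon> \<le> 1"
    and cone: "\<And>r w. 0 < r \<Longrightarrow> norm w \<le> \<epsilon> * r \<Longrightarrow> r * \<bar>L v\<bar> / 2 \<le> \<bar>L (r *\<^sub>R v + w)\<bar>"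
    using linear_lower_bound_in_cone[OF L Lv] by blast
  have nv: "norm v + 1 > 0"
    using norm_ge_zero[of v] by linarith
  define \<kappa> where "\<kappa> = \<bar>L v\<bar> / (4 * (norm v + 1))"
  have "\<kappa> > 0"
    unfolding \<kappa>_def using Lv nv by simp
  then obtain \<delta>0 where \<delta>0: "\<delta>0 > 0" "\<And>y. norm (y - u0) < \<delta>0 \<Longrightarrow>
      norm (F y - F u0 - L (y - u0)) \<le> \<kappa> * norm (y - u0)"
    using F unfolding has_derivative_at_alt by blast
  show ?thesis
  proof (rule that[OF \<epsilon>, of "\<delta>0 / (norm v + 1)"])
    show "0 < \<delta>0 / (norm v + 1)"
      using \<delta>0 nv by simp
    fix r u assume r: "0 < r" "r < \<delta>0 / (norm v + 1)" and u: "norm (u - (u0 + r *\<^sub>R v)) \<le> \<epsilon> * r"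
    define w where "w = u - (u0 + r *\<^sub>R v)"
    have near: "norm (u - u0) \<le> r * (norm v + 1)"
      using norm_le_in_cone[OF \<epsilon>(2) r(1) u] .
    show "F u \<noteq> F u0"
    proof
      assume "F u = F u0"
      moreover have "norm (u - u0) < \<delta>0"
        using near r nv by (simp add: field_simps)
      ultimately have "\<bar>L (u - u0)\<bar> \<le> \<kappa> * (r * (norm v + 1))"
        using \<delta>0(2)[of u] near \<open>\<kappa> > 0\<close> by (simp add: order_trans mult_left_mono)
      also have "\<dots> = r * \<bar>L v\<bar> / 4"
        using nv by (simp add: \<kappa>_def field_simps)
      finally have "\<bar>L (r *\<^sub>R v + w)\<bar> \<le> r * \<bar>L v\<bar> / 4"
        by (simp add: w_def)
      moreover have "r * \<bar>L v\<bar> / 2 \<le> \<bar>L (r *\<^sub>R v + w)\<bar>"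
        using cone[OF r(1), of w] u unfolding w_def by simp
      moreover have "0 < r * \<bar>L v\<bar>"
        using r Lv by simp
      ultimately show False
        by linarith
    qed
  qed
qed

lemma differentiable_in_cone:
  fixes h :: "real^'n \<Rightarrow> real"
  assumes grad_i: "((\<lambda>y. grad h y $ i) has_derivative L) (at u0)" and Lv: "L v \<noteq> 0"
  obtains \<epsilon> \<delta> where "0 < \<epsilon>" "\<epsilon> \<le> 1" "0 < \<delta>"
    "\<And>r u. 0 < r \<Longrightarrow> r < \<delta> \<Longrightarrow> norm (u - (u0 + r *\<^sub>R v)) \<le> \<epsilon> * r \<Longrightarrow> h differentiable (at u)"
proof -
  define J where "J = (SOME D :: real^'n \<Rightarrow> real. False) (axis i 1)"
  obtain \<epsilon> \<delta> where \<epsilon>\<delta>: "0 < \<epsilon>" "\<epsilon> \<le> 1" "0 < \<delta>" and avoid: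
    "\<And>r u. 0 < r \<Longrightarrow> r < \<delta> \<Longrightarrow> norm (u - (u0 + r *\<^sub>R v)) \<le> \<epsilon> * r \<Longrightarrow> grad h u $ i \<noteq> J"
  proof (cases "grad h u0 $ i = J")
    case True
    show ?thesis
      by (rule has_derivative_ne_in_cone[OF grad_i Lv]) (use that True in auto)
  next
    case False
    obtain e where e: "e > 0" "\<And>u. dist u0 u < e \<Longrightarrow> grad h u $ i \<noteq> J"
      using continuous_at_avoid[OF has_derivative_continuous[OF grad_i] False] by blast
    have nv: "norm v + 1 > 0"
      using norm_ge_zero[of v] by linarith
    show ?thesis
    proof (rule that[of 1 "e / (norm v + 1)"])
      fix r u assume r: "0 < r" "r < e / (norm v + 1)" and u: "norm (u - (u0 + r *\<^sub>R v)) \<le> 1 * r"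
      have "norm (u - u0) \<le> r * (norm v + 1)"
        using norm_le_in_cone[OF order_refl r(1) u] .
      also have "\<dots> < e"
        using r nv by (simp add: field_simps)
      finally show "grad h u $ i \<noteq> J"
        using e(2) by (simp add: dist_norm norm_minus_commute)
    qed (use e nv in auto)
  qed
  show ?thesis
  proof (rule that[OF \<epsilon>\<delta>])
    fix r u assume "0 < r" "r < \<delta>" "norm (u - (u0 + r *\<^sub>R v)) \<le> \<epsilon> * r"
    then have "grad h u $ i \<noteq> J"
      by (rule avoid)
    then show "h differentiable (at u)"
      using grad_not_differentiable[of h u] unfolding J_def by force
  qed
qed

lemma has_derivative_along_axis:
  fixes h :: "real^'n \<Rightarrow> real"
  assumes "h differentiable (at (q + t *\<^sub>R axis i 1))"
  shows "((\<lambda>s. h (q + s *\<^sub>R axis i 1)) has_derivative (\<lambda>s. s * grad h (q + t *\<^sub>R axis i 1) $ i)) (at t)"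
proof -
  let ?D = "frechet_derivative h (at (q + t *\<^sub>R axis i 1))"
  have hD: "(h has_derivative ?D) (at (q + t *\<^sub>R axis i 1))"
    using assms frechet_derivative_works by blast
  have "((\<lambda>s. q + s *\<^sub>R axis i 1) has_derivative (\<lambda>s. s *\<^sub>R axis i 1)) (at t)"
    by (auto intro!: derivative_eq_intros)
  then have "((\<lambda>s. h (q + s *\<^sub>R axis i 1)) has_derivative (\<lambda>s. ?D (s *\<^sub>R axis i 1))) (at t)"
    using hD by (rule has_derivative_compose)
  moreover have "?D (s *\<^sub>R axis i 1) = s * grad h (q + t *\<^sub>R axis i 1) $ i" for s
    using linear_scale[OF has_derivative_linear[OF hD]] by (simp add: grad_def)
  ultimately show ?thesis
    by simp
qed

lemma mixed_difference_mvt: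
  fixes h :: "real^'n \<Rightarrow> real"
  assumes s: "0 < s"
    and diff: "\<And>t. 0 \<le> t \<Longrightarrow> t \<le> s \<Longrightarrow>
      h differentiable (at (p + t *\<^sub>R axis i 1)) \<and> h differentiable (at (p' + t *\<^sub>R axis i 1))"
  obtains \<xi> where "0 < \<xi>" "\<xi> < s"
    "(h (p' + s *\<^sub>R axis i 1) - h (p + s *\<^sub>R axis i 1)) - (h p' - h p)
      = s * (grad h (p' + \<xi> *\<^sub>R axis i 1) $ i - grad h (p + \<xi> *\<^sub>R axis i 1) $ i)"
proof -
  define \<phi> where "\<phi> t = h (p' + t *\<^sub>R axis i 1) - h (p + t *\<^sub>R axis i 1)" for t
  define \<phi>' where "\<phi>' t = (\<lambda>u. u * (grad h (p' + t *\<^sub>R axis i 1) $ i - grad h (p + t *\<^sub>R axis i 1) $ i))" for t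
  have "(\<phi> has_derivative \<phi>' t) (at t within {0..s})" if "0 \<le> t" "t \<le> s" for t
  proof -
    have "((\<lambda>t. h (p' + t *\<^sub>R axis i 1)) has_derivative (\<lambda>u. u * grad h (p' + t *\<^sub>R axis i 1) $ i)) (at t)"
      using diff[OF that] by (intro has_derivative_along_axis) blast
    moreover have "((\<lambda>t. h (p + t *\<^sub>R axis i 1)) has_derivative (\<lambda>u. u * grad h (p + t *\<^sub>R axis i 1) $ i)) (at t)"
      using diff[OF that] by (intro has_derivative_along_axis) blast
    ultimately have "(\<phi> has_derivative (\<lambda>u. u * grad h (p' + t *\<^sub>R axis i 1) $ i - u * grad h (p + t *\<^sub>R axis i 1) $ i)) (at t)"
      unfolding \<phi>_def by (rule has_derivative_diff)
    then show ?thesis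
      unfolding \<phi>'_def right_diff_distrib by (rule has_derivative_at_withinI)
  qed
  then obtain \<xi> where "\<xi> \<in> {0<..<s}" "\<phi> s - \<phi> 0 = \<phi>' \<xi> (s - 0)"
    using mvt_simple[OF s] by blast
  then show ?thesis
    by (intro that[of \<xi>]) (auto simp: \<phi>_def \<phi>'_def algebra_simps)
qed

lemma linear_approx_difference:
  fixes f :: "'a::real_normed_vector \<Rightarrow> real"
  assumes L: "linear L" and \<kappa>: "\<kappa> \<ge> 0"
    and approx: "\<And>y. norm (y - u0) < \<delta> \<Longrightarrow> \<bar>f y - f u0 - L (y - u0)\<bar> \<le> \<kappa> * norm (y - u0)"
    and q1: "norm (q1 - u0) < \<delta>" "norm (q1 - u0) \<le> R"
    and q2: "norm (q2 - u0) < \<delta>" "norm (q2 - u0) \<le> R"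
  shows "\<bar>f q1 - f q2 - L (q1 - q2)\<bar> \<le> 2 * \<kappa> * R"
proof -
  have "L (q1 - q2) = L (q1 - u0) - L (q2 - u0)"
    using linear_diff[OF L, of "q1 - u0" "q2 - u0"] by simp
  moreover have "\<bar>f q1 - f u0 - L (q1 - u0)\<bar> \<le> \<kappa> * R"
    using approx[OF q1(1)] mult_left_mono[OF q1(2) \<kappa>] by simp
  moreover have "\<bar>f q2 - f u0 - L (q2 - u0)\<bar> \<le> \<kappa> * R"
    using approx[OF q2(1)] mult_left_mono[OF q2(2) \<kappa>] by simp
  ultimately show ?thesis
    by linarith
qed

lemma second_difference_estimate:
  fixes h :: "real^'n \<Rightarrow> real"
  assumes s: "0 < s" and L: "linear L" and \<kappa>: "0 \<le> \<kappa>" and R: "R < \<delta>"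
    and approx: "\<And>y. norm (y - u0) < \<delta> \<Longrightarrow>
      \<bar>grad h y $ i - grad h u0 $ i - L (y - u0)\<bar> \<le> \<kappa> * norm (y - u0)"
    and square: "\<And>\<alpha> \<beta>. 0 \<le> \<alpha> \<Longrightarrow> \<alpha> \<le> s \<Longrightarrow> 0 \<le> \<beta> \<Longrightarrow> \<beta> \<le> s \<Longrightarrow>
      h differentiable (at (p + \<alpha> *\<^sub>R axis i 1 + \<beta> *\<^sub>R axis j 1))
      \<and> norm (p + \<alpha> *\<^sub>R axis i 1 + \<beta> *\<^sub>R axis j 1 - u0) \<le> R"
  shows "\<bar>h (p + s *\<^sub>R axis i 1 + s *\<^sub>R axis j 1) - h (p + s *\<^sub>R axis i 1) - h (p + s *\<^sub>R axis j 1) + h p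
    - s\<^sup>2 * L (axis j 1)\<bar> \<le> 2 * \<kappa> * R * s"
proof -
  let ?ei = "axis i 1 :: real^'n" and ?ej = "axis j 1 :: real^'n"
  have swap: "p + s *\<^sub>R ?ej + t *\<^sub>R ?ei = p + t *\<^sub>R ?ei + s *\<^sub>R ?ej" for t
    by (simp add: algebra_simps)
  have "h differentiable (at (p + t *\<^sub>R ?ei)) \<and> h differentiable (at (p + s *\<^sub>R ?ej + t *\<^sub>R ?ei))"
    if "0 \<le> t" "t \<le> s" for t
    using square[of t 0] square[of t s] that s unfolding swap by simp
  then obtain \<xi> where \<xi>: "0 < \<xi>" "\<xi> < s" and mvt:
    "(h (p + s *\<^sub>R ?ej + s *\<^sub>R ?ei) - h (p + s *\<^sub>R ?ei)) - (h (p + s *\<^sub>R ?ej) - h p)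
      = s * (grad h (p + s *\<^sub>R ?ej + \<xi> *\<^sub>R ?ei) $ i - grad h (p + \<xi> *\<^sub>R ?ei) $ i)"
    using mixed_difference_mvt[OF s, of h p i "p + s *\<^sub>R ?ej"] by blast
  let ?q1 = "p + s *\<^sub>R ?ej + \<xi> *\<^sub>R ?ei" and ?q2 = "p + \<xi> *\<^sub>R ?ei"
  have "norm (?q1 - u0) \<le> R" and "norm (?q2 - u0) \<le> R"
    using square[of \<xi> s] square[of \<xi> 0] \<xi> s unfolding swap by simp_all
  then have "\<bar>grad h ?q1 $ i - grad h ?q2 $ i - L (?q1 - ?q2)\<bar> \<le> 2 * \<kappa> * R"
    using R by (intro linear_approx_difference[OF L \<kappa> approx]) auto
  moreover have "L (?q1 - ?q2) = s * L ?ej"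
    using linear_scale[OF L] by simp
  ultimately have "s * \<bar>grad h ?q1 $ i - grad h ?q2 $ i - s * L ?ej\<bar> \<le> s * (2 * \<kappa> * R)"
    using s by simp
  moreover have "h (p + s *\<^sub>R ?ei + s *\<^sub>R ?ej) - h (p + s *\<^sub>R ?ei) - h (p + s *\<^sub>R ?ej) + h p
      - s\<^sup>2 * L ?ej = s * (grad h ?q1 $ i - grad h ?q2 $ i - s * L ?ej)"
    using mvt unfolding swap by (simp add: power2_eq_square algebra_simps)
  ultimately show ?thesis
    using s by (simp add: abs_mult mult.commute mult.left_commute)
qed

lemma mixed_partials_estimate:
  fixes h :: "real^'n \<Rightarrow> real"
  assumes s: "0 < s" and Li: "linear Li" and Lj: "linear Lj" and \<kappa>: "0 \<le> \<kappa>"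
    and R: "R < \<delta>i" "R < \<delta>j"
    and approx_i: "\<And>y. norm (y - u0) < \<delta>i \<Longrightarrow>
      \<bar>grad h y $ i - grad h u0 $ i - Li (y - u0)\<bar> \<le> \<kappa> * norm (y - u0)"
    and approx_j: "\<And>y. norm (y - u0) < \<delta>j \<Longrightarrow>
      \<bar>grad h y $ j - grad h u0 $ j - Lj (y - u0)\<bar> \<le> \<kappa> * norm (y - u0)"
    and square: "\<And>\<alpha> \<beta> k l. 0 \<le> \<alpha> \<Longrightarrow> \<alpha> \<le> s \<Longrightarrow> 0 \<le> \<beta> \<Longrightarrow> \<beta> \<le> s \<Longrightarrow>
      h differentiable (at (p + \<alpha> *\<^sub>R axis k 1 + \<beta> *\<^sub>R axis l 1))
      \<and> norm (p + \<alpha> *\<^sub>R axis k 1 + \<beta> *\<^sub>R axis l 1 - u0) \<le> R"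
  shows "s * \<bar>Li (axis j 1) - Lj (axis i 1)\<bar> \<le> 4 * \<kappa> * R"
proof -
  have swap: "p + s *\<^sub>R axis j 1 + s *\<^sub>R axis i 1 = p + s *\<^sub>R axis i 1 + s *\<^sub>R axis j 1"
    by (simp add: algebra_simps)
  have "\<bar>h (p + s *\<^sub>R axis i 1 + s *\<^sub>R axis j 1) - h (p + s *\<^sub>R axis i 1) - h (p + s *\<^sub>R axis j 1) + h p
      - s\<^sup>2 * Li (axis j 1)\<bar> \<le> 2 * \<kappa> * R * s"
    using R square by (intro second_difference_estimate[OF s Li \<kappa> _ approx_i]) auto
  moreover have "\<bar>h (p + s *\<^sub>R axis j 1 + s *\<^sub>R axis i 1) - h (p + s *\<^sub>R axis j 1) - h (p + s *\<^sub>R axis i 1) + h p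
      - s\<^sup>2 * Lj (axis i 1)\<bar> \<le> 2 * \<kappa> * R * s"
    using R square by (intro second_difference_estimate[OF s Lj \<kappa> _ approx_j]) auto
  ultimately have "\<bar>s\<^sup>2 * Li (axis j 1) - s\<^sup>2 * Lj (axis i 1)\<bar> \<le> 2 * (2 * \<kappa> * R * s)"
    unfolding swap by arith
  then have "s * (s * \<bar>Li (axis j 1) - Lj (axis i 1)\<bar>) \<le> s * (4 * \<kappa> * R)"
    by (simp add: power2_eq_square abs_mult right_diff_distrib[symmetric] mult_ac)
  then show ?thesis
    using s by simp
qed

lemma square_in_cone:
  fixes u0 v :: "real^'n" and k l :: 'n
  assumes \<epsilon>: "0 < \<epsilon>" "\<epsilon> \<le> 1" and r: "0 < r" "r < \<delta>" and v: "norm v = 1"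
    and cone: "\<And>r u. 0 < r \<Longrightarrow> r < \<delta> \<Longrightarrow> norm (u - (u0 + r *\<^sub>R v)) \<le> \<epsilon> * r \<Longrightarrow> P u"
    and \<alpha>\<beta>: "0 \<le> \<alpha>" "\<alpha> \<le> \<epsilon> * r / 3" "0 \<le> \<beta>" "\<beta> \<le> \<epsilon> * r / 3"
  defines "q \<equiv> u0 + r *\<^sub>R v + \<alpha> *\<^sub>R axis k 1 + \<beta> *\<^sub>R axis l 1"
  shows "P q \<and> norm (q - u0) \<le> 2 * r"
proof -
  have "\<epsilon> * r \<le> r"
    using \<epsilon> r(1) by (simp add: mult_le_cancel_right1)
  have "norm (\<alpha> *\<^sub>R axis k 1 + \<beta> *\<^sub>R axis l 1 :: real^'n) \<le> \<alpha> + \<beta>"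
    using norm_triangle_ineq[of "\<alpha> *\<^sub>R axis k 1 :: real^'n" "\<beta> *\<^sub>R axis l 1"] \<alpha>\<beta> by simp
  then have "norm (q - (u0 + r *\<^sub>R v)) \<le> \<epsilon> * r" and "norm (q - (u0 + r *\<^sub>R v)) \<le> r"
    using \<alpha>\<beta> \<open>\<epsilon> * r \<le> r\<close> by (simp_all add: q_def add.assoc)
  moreover have "norm (q - u0) \<le> r + norm (q - (u0 + r *\<^sub>R v))"
    using norm_triangle_ineq[of "r *\<^sub>R v" "q - (u0 + r *\<^sub>R v)"] r v by simp
  ultimately show ?thesis
    using cone[OF r] by simp
qed

lemma mixed_partials_symmetric:
  fixes h :: "real^'n \<Rightarrow> real"
  assumes Lder: "\<And>i. ((\<lambda>y. grad h y $ i) has_derivative L i) (at u0)"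
  shows "L i (axis j 1) = L j (axis i 1)"
proof (rule ccontr)
  have approx: "\<exists>\<delta>>0. \<forall>y. norm (y - u0) < \<delta> \<longrightarrow>
      \<bar>grad h y $ i - grad h u0 $ i - L i (y - u0)\<bar> \<le> \<kappa> * norm (y - u0)" if "\<kappa> > 0" for i \<kappa>
    using Lder[of i] that unfolding has_derivative_at_alt by simp
  assume ne: "L i (axis j 1) \<noteq> L j (axis i 1)"
  then obtain i0 j0 where "L i0 (axis j0 1) \<noteq> 0"
    by metis
  then obtain \<epsilon> \<delta> where \<epsilon>: "0 < \<epsilon>" "\<epsilon> \<le> 1" "0 < \<delta>" and cone: "\<And>r u. 0 < r \<Longrightarrow> r < \<delta> \<Longrightarrow>
      norm (u - (u0 + r *\<^sub>R axis j0 1)) \<le> \<epsilon> * r \<Longrightarrow> h differentiable (at u)"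
    using differentiable_in_cone[OF Lder] by metis
  define d where "d = \<bar>L i (axis j 1) - L j (axis i 1)\<bar>"
  define \<kappa> where "\<kappa> = \<epsilon> * d / 48"
  have "d > 0" "\<kappa> > 0"
    using ne \<epsilon> by (simp_all add: d_def \<kappa>_def)
  then obtain \<delta>i \<delta>j where "\<delta>i > 0" "\<delta>j > 0"
    and approx_i: "\<And>y. norm (y - u0) < \<delta>i \<Longrightarrow> \<bar>grad h y $ i - grad h u0 $ i - L i (y - u0)\<bar> \<le> \<kappa> * norm (y - u0)"
    and approx_j: "\<And>y. norm (y - u0) < \<delta>j \<Longrightarrow> \<bar>grad h y $ j - grad h u0 $ j - L j (y - u0)\<bar> \<le> \<kappa> * norm (y - u0)"
    using approx[of \<kappa> i] approx[of \<kappa> j] by blast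
  define r where "r = min \<delta> (min \<delta>i \<delta>j) / 3"
  have r: "0 < r" "r < \<delta>" "2 * r < \<delta>i" "2 * r < \<delta>j"
    using \<epsilon> \<open>\<delta>i > 0\<close> \<open>\<delta>j > 0\<close> by (auto simp: r_def)
  have "\<epsilon> * r / 3 * d \<le> 4 * \<kappa> * (2 * r)"
    unfolding d_def
  proof (rule mixed_partials_estimate[where p = "u0 + r *\<^sub>R axis j0 1",
        OF _ has_derivative_linear[OF Lder] has_derivative_linear[OF Lder] _ r(3,4) approx_i approx_j])
    show "0 < \<epsilon> * r / 3" and "0 \<le> \<kappa>"
      using \<epsilon> r \<open>\<kappa> > 0\<close> by simp_all
    fix \<alpha> \<beta> k l assume "0 \<le> \<alpha>" "\<alpha> \<le> \<epsilon> * r / 3" "0 \<le> \<beta>" "\<beta> \<le> \<epsilon> * r / 3"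
    then show "h differentiable (at (u0 + r *\<^sub>R axis j0 1 + \<alpha> *\<^sub>R axis k 1 + \<beta> *\<^sub>R axis l 1))
        \<and> norm (u0 + r *\<^sub>R axis j0 1 + \<alpha> *\<^sub>R axis k 1 + \<beta> *\<^sub>R axis l 1 - u0) \<le> 2 * r"
      using square_in_cone[where P = "\<lambda>u. h differentiable (at u)" and v = "axis j0 1", OF \<epsilon>(1,2) r(1,2) _ cone]
      by simp
  qed
  then have "2 * (\<epsilon> * r * d) \<le> \<epsilon> * r * d"
    unfolding \<kappa>_def by (simp add: field_simps)
  moreover have "0 < \<epsilon> * r * d"
    using \<epsilon> r \<open>d > 0\<close> by simp
  ultimately show False
    by linarith
qed

lemma hess_symmetric:
  fixes h :: "real^'n \<Rightarrow> real"
  assumes "\<And>i. (\<lambda>y. grad h y $ i) differentiable (at u0)"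
  shows "Finite_Cartesian_Product.transpose (hess h u0) = hess h u0"
proof -
  define L where "L i = frechet_derivative (\<lambda>y. grad h y $ i) (at u0)" for i
  have "((\<lambda>y. grad h y $ i) has_derivative L i) (at u0)" for i
    using assms[of i] unfolding L_def frechet_derivative_works .
  then have "L i (axis j 1) = L j (axis i 1)" for i j
    by (rule mixed_partials_symmetric)
  then show ?thesis
    by (simp add: vec_eq_iff transpose_def hess_def L_def)
qed

lemma linear_real_vec_expansion:
  fixes D :: "real^'n \<Rightarrow> real"
  assumes "linear D"
  shows "D w = (\<Sum>k\<in>UNIV. w $ k * D (axis k 1))"
proof -
  have "D w = D (\<Sum>k\<in>UNIV. w $ k *\<^sub>R axis k 1)"
    using basis_expansion[of w] by (simp add: scalar_mult_eq_scaleR)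
  also have "\<dots> = (\<Sum>k\<in>UNIV. D (w $ k *\<^sub>R axis k 1))"
    by (rule linear_sum[OF assms])
  also have "\<dots> = (\<Sum>k\<in>UNIV. w $ k * D (axis k 1))"
    using linear_scale[OF assms] by simp
  finally show ?thesis .
qed

lemma has_derivative_affine:
  fixes A :: "real^'n^'m"
  shows "((\<lambda>x. A *v x - b) has_derivative (\<lambda>v. A *v v)) (at y)"
proof -
  have "((\<lambda>x. A *v x) has_derivative (\<lambda>v. A *v v)) (at y)"
    using bounded_linear.has_derivative[OF matrix_vector_mul_bounded_linear[of A] has_derivative_ident]
    by simp
  from has_derivative_diff[OF this has_derivative_const[of b]] show ?thesis
    by simp
qed

lemma transpose_matrix_vector_nth:
  fixes A :: "real^'n^'m"
  shows "(Finite_Cartesian_Product.transpose A *v v) $ i = (\<Sum>k\<in>UNIV. A $ k $ i * v $ k)"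
  by (simp add: matrix_vector_mult_def transpose_def mult.commute)

lemma grad_affine_comp:
  fixes A :: "real^'n^'m" and h :: "real^'m \<Rightarrow> real"
  assumes "h differentiable (at (A *v y - b))"
  shows "grad (\<lambda>x. h (A *v x - b)) y = Finite_Cartesian_Product.transpose A *v grad h (A *v y - b)"
proof -
  let ?D = "frechet_derivative h (at (A *v y - b))"
  have hD: "(h has_derivative ?D) (at (A *v y - b))"
    using assms frechet_derivative_works by blast
  have "frechet_derivative (\<lambda>x. h (A *v x - b)) (at y) = (\<lambda>v. ?D (A *v v))"
    by (rule frechet_derivative_at[OF has_derivative_compose[OF has_derivative_affine hD], symmetric])
  then have "grad (\<lambda>x. h (A *v x - b)) y $ i = (\<Sum>k\<in>UNIV. A $ k $ i * grad h (A *v y - b) $ k)" for i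
    using linear_real_vec_expansion[OF has_derivative_linear[OF hD], of "A *v axis i 1"]
    by (simp add: grad_def matrix_vector_mult_basis column_def)
  then show ?thesis
    by (simp add: vec_eq_iff transpose_matrix_vector_nth del: transpose_matrix_vector)
qed

lemma hess_affine_comp:
  fixes A :: "real^'n^'m" and h :: "real^'m \<Rightarrow> real"
  assumes U: "open U" "y \<in> U"
    and dh: "\<And>x. x \<in> U \<Longrightarrow> h differentiable (at (A *v x - b))"
    and dgrad: "\<And>k. (\<lambda>u. grad h u $ k) differentiable (at (A *v y - b))"
  shows "hess (\<lambda>x. h (A *v x - b)) y
    = Finite_Cartesian_Product.transpose A ** hess h (A *v y - b) ** A"
proof -
  let ?u = "A *v y - b"
  define L where "L k = frechet_derivative (\<lambda>u. grad h u $ k) (at ?u)" for k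
  have Lder: "((\<lambda>u. grad h u $ k) has_derivative L k) (at ?u)" for k
    using dgrad[of k] unfolding L_def frechet_derivative_works .
  have entry: "hess (\<lambda>x. h (A *v x - b)) y $ i $ l = (\<Sum>k\<in>UNIV. A $ k $ i * L k (A *v axis l 1))" for i l
  proof -
    have "((\<lambda>x. \<Sum>k\<in>UNIV. A $ k $ i * grad h (A *v x - b) $ k) has_derivative
        (\<lambda>v. \<Sum>k\<in>UNIV. A $ k $ i * L k (A *v v))) (at y)"
      by (intro has_derivative_sum has_derivative_mult_right has_derivative_compose[OF has_derivative_affine Lder])
    then have "((\<lambda>x. grad (\<lambda>x. h (A *v x - b)) x $ i) has_derivative
        (\<lambda>v. \<Sum>k\<in>UNIV. A $ k $ i * L k (A *v v))) (at y)"
      by (rule has_derivative_transform_within_open[OF _ U])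
        (simp add: grad_affine_comp[OF dh] transpose_matrix_vector_nth del: transpose_matrix_vector)
    then show ?thesis
      by (simp add: hess_def frechet_derivative_at[symmetric])
  qed
  have L: "L k w = (\<Sum>p\<in>UNIV. w $ p * hess h ?u $ k $ p)" for k w
    by (subst linear_real_vec_expansion[OF has_derivative_linear[OF Lder[of k]]]) (simp add: hess_def L_def)
  have "hess (\<lambda>x. h (A *v x - b)) y $ i $ l = (Finite_Cartesian_Product.transpose A ** hess h ?u ** A) $ i $ l"
    for i l
  proof -
    have "hess (\<lambda>x. h (A *v x - b)) y $ i $ l
        = (\<Sum>k\<in>UNIV. \<Sum>p\<in>UNIV. A $ k $ i * (A $ p $ l * hess h ?u $ k $ p))"
      by (simp add: entry L matrix_vector_mult_basis column_def sum_distrib_left)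
    also have "\<dots> = (\<Sum>p\<in>UNIV. \<Sum>k\<in>UNIV. A $ k $ i * hess h ?u $ k $ p * A $ p $ l)"
      by (subst sum.swap) (simp add: algebra_simps)
    also have "\<dots> = (Finite_Cartesian_Product.transpose A ** hess h ?u ** A) $ i $ l"
      by (simp add: matrix_matrix_mult_def transpose_def sum_distrib_right)
    finally show ?thesis .
  qed
  then show ?thesis
    by (simp add: vec_eq_iff)
qed

section \<open>Strongly convex quadratic models plus a convex regularizer\<close>

definition quadratic :: "real \<Rightarrow> real^'n \<Rightarrow> real^'n \<Rightarrow> real^'n^'n \<Rightarrow> real^'n \<Rightarrow> real" where
  "quadratic k0 a c G x = k0 + a \<bullet> (x - c) + 1/2 * ((x - c) \<bullet> (G *v (x - c)))"

lemma continuous_on_quadratic: "continuous_on S (quadratic k0 a c G)"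
  unfolding quadratic_def
  by (intro continuous_intros continuous_on_compose2[OF matrix_vector_mult_linear_continuous_on]) auto

lemma quadratic_lower_bound:
  assumes "\<And>d. \<mu> * (norm d)\<^sup>2 \<le> d \<bullet> (G *v d)"
  shows "k0 - norm a * norm (x - c) + \<mu> / 2 * (norm (x - c))\<^sup>2 \<le> quadratic k0 a c G x"
  using Cauchy_Schwarz_ineq2[of a "x - c"] assms[of "x - c"] unfolding quadratic_def by linarith

lemma quadratic_increment:
  assumes "Finite_Cartesian_Product.transpose G = G"
  shows "quadratic k0 a c G (x + t *\<^sub>R v) - quadratic k0 a c G x
    = t * ((a + G *v (x - c)) \<bullet> v) + t\<^sup>2 / 2 * (v \<bullet> (G *v v))"
proof -
  have sym: "u \<bullet> (G *v v) = v \<bullet> (G *v u)" for u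
    using inner_matrix_symmetric[OF assms] by (simp add: inner_commute)
  show ?thesis
    using sym[of x] sym[of c]
    unfolding quadratic_def
    by (simp add: matrix_vector_right_distrib matrix_vector_mult_scaleR inner_add_left
        inner_add_right inner_commute power2_eq_square algebra_simps)
qed

lemma quadratic_growth_bound:
  fixes t :: real
  assumes "\<mu> > 0" and "0 \<le> P" and "\<mu> / 2 * t\<^sup>2 \<le> P * t + B"
  shows "t \<le> max 1 (2 * (P + \<bar>B\<bar>) / \<mu>)"
proof (cases "t \<le> 1")
  case False
  then have "B \<le> \<bar>B\<bar> * t"
    by (metis abs_ge_self abs_ge_zero less_eq_real_def mult_le_cancel_left1 not_le order_trans)
  then have "t * (\<mu> / 2 * t) \<le> t * (P + \<bar>B\<bar>)"
    using assms(3) by (simp add: power2_eq_square algebra_simps)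
  then have "\<mu> / 2 * t \<le> P + \<bar>B\<bar>"
    using False by simp
  then have "t \<le> 2 * (P + \<bar>B\<bar>) / \<mu>"
    using assms(1) by (simp add: field_simps)
  then show ?thesis
    by simp
qed simp

lemma infinite_off_edom: "x \<notin> edom g \<Longrightarrow> g x = \<infinity>"
  unfolding edom_def by (simp add: top.not_eq_extremum)

lemma spec_norm_nonneg: "0 \<le> spec_norm G"
  unfolding spec_norm_def by (rule onorm_pos_le[OF matrix_vector_mul_bounded_linear])

lemma quadratic_identity_matrix: "quadratic 0 0 w (mat 1) z = 1/2 * (norm (z - w))\<^sup>2"
  by (simp add: quadratic_def power2_norm_eq_inner)

locale convex_regularizer =
  fixes g :: "real^'n \<Rightarrow> ereal"
  assumes proper: "proper g" and lsc: "lsc g"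
    and convex_edom: "convex (edom g)"
    and convex_on_edom: "convex_on (edom g) (\<lambda>x. real_of_ereal (g x))"
    and continuous_on_edom: "continuous_on (edom g) (\<lambda>x. real_of_ereal (g x))"
begin

lemma real_on_edom: "x \<in> edom g \<Longrightarrow> g x = ereal (real_of_ereal (g x))"
  using proper unfolding proper_def edom_def by (cases "g x") auto

lemma plus_on_edom: "x \<in> edom g \<Longrightarrow> ereal r + g x = ereal (r + real_of_ereal (g x))"
  by (subst real_on_edom) simp_all

lemma edom_nonempty: "\<exists>x. x \<in> edom g"
  using proper unfolding proper_def edom_def by (auto simp: less_top)

lemma bounded_below_on_compact:
  assumes "compact K"
  shows "\<exists>m. \<forall>z\<in>K. ereal m \<le> g z"
proof (rule ccontr)
  assume "\<not> ?thesis"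
  then have "\<forall>n::nat. \<exists>z\<in>K. g z < ereal (- real n)"
    by (meson not_le)
  then obtain Z where Z: "\<And>n. Z n \<in> K" "\<And>n. g (Z n) < ereal (- real n)"
    by metis
  obtain l \<sigma> where "l \<in> K" "strict_mono \<sigma>" and lim: "(Z \<circ> \<sigma>) \<longlonglongrightarrow> l"
    using assms Z(1) unfolding compact_def by metis
  have "((\<lambda>k. g (Z (\<sigma> k))) \<longlongrightarrow> -\<infinity>) sequentially"
    unfolding tendsto_MInfty
  proof
    fix r :: real
    obtain N :: nat where "- r \<le> real N"
      using real_arch_simple by blast
    have "g (Z (\<sigma> k)) < ereal r" if "N \<le> k" for k
    proof -
      have "N \<le> \<sigma> k"
        using seq_suble[OF \<open>strict_mono \<sigma>\<close>, of k] that by linarith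
      then have "ereal (- real (\<sigma> k)) \<le> ereal r"
        using \<open>- r \<le> real N\<close> by simp
      then show ?thesis
        using Z(2)[of "\<sigma> k"] by (rule order.strict_trans2[rotated])
    qed
    then show "\<forall>\<^sub>F k in sequentially. g (Z (\<sigma> k)) < ereal r"
      by (rule eventually_sequentiallyI)
  qed
  then have "liminf (\<lambda>k. g (Z (\<sigma> k))) = -\<infinity>"
    by (intro lim_imp_Liminf) simp
  moreover have "g l \<le> liminf (\<lambda>k. g ((Z \<circ> \<sigma>) k))"
    using lsc lim unfolding lsc_def by blast
  ultimately have "g l = -\<infinity>"
    by simp
  then show False
    using proper by (simp add: proper_def)
qed

lemma radial_lower_bound:
  assumes x0: "x0 \<in> edom g" and x: "x \<in> edom g" and far: "norm (x - x0) > 1"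
    and m: "\<And>z. z \<in> edom g \<Longrightarrow> norm (z - x0) = 1 \<Longrightarrow> m \<le> real_of_ereal (g z)"
  shows "norm (x - x0) * m \<le> (norm (x - x0) - 1) * real_of_ereal (g x0) + real_of_ereal (g x)"
proof -
  define t where "t = norm (x - x0)"
  have t: "t > 1"
    using far by (simp add: t_def)
  define z where "z = (1 - 1/t) *\<^sub>R x0 + (1/t) *\<^sub>R x"
  have "z \<in> edom g"
    unfolding z_def using t by (intro convexD[OF convex_edom x0 x]) auto
  moreover have "z - x0 = (1/t) *\<^sub>R (x - x0)"
    by (simp add: z_def algebra_simps)
  then have "norm (z - x0) = 1"
    using t by (auto simp: t_def)
  ultimately have "m \<le> real_of_ereal (g z)"
    by (rule m)
  also have "\<dots> \<le> (1 - 1/t) * real_of_ereal (g x0) + (1/t) * real_of_ereal (g x)"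
    unfolding z_def using t x0 x by (intro convex_onD[OF convex_on_edom]) auto
  finally have "t * m \<le> t * ((1 - 1/t) * real_of_ereal (g x0) + (1/t) * real_of_ereal (g x))"
    using t by (intro mult_left_mono) auto
  also have "\<dots> = (t - 1) * real_of_ereal (g x0) + real_of_ereal (g x)"
    using t by (simp add: field_simps)
  finally show ?thesis
    by (simp add: t_def)
qed

lemma linear_growth_lower_bound:
  assumes x0: "x0 \<in> edom g"
  obtains C where "C \<ge> 0" "\<And>x. x \<in> edom g \<Longrightarrow> - C * (1 + norm (x - x0)) \<le> real_of_ereal (g x)"
proof -
  obtain m where m: "\<And>z. z \<in> cball x0 1 \<Longrightarrow> ereal m \<le> g z"
    using bounded_below_on_compact[OF compact_cball] by blast
  have m_le: "m \<le> real_of_ereal (g z)" if "z \<in> edom g" "norm (z - x0) \<le> 1" for z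
    using m[of z] real_on_edom[OF that(1)] that(2)
    by (metis dist_norm ereal_less_eq(3) mem_cball norm_minus_commute)
  define g0 where "g0 = real_of_ereal (g x0)"
  define C where "C = \<bar>m\<bar> + \<bar>g0\<bar>"
  have "- C * (1 + t) \<le> real_of_ereal (g x)" if x: "x \<in> edom g" and t: "t = norm (x - x0)" for x t
  proof (cases "t \<le> 1")
    case True
    have "C * 1 \<le> C * (1 + t)"
      using t by (intro mult_left_mono) (auto simp: C_def)
    moreover have "- C \<le> m"
      using abs_ge_minus_self[of m] abs_ge_zero[of g0] unfolding C_def by linarith
    ultimately show ?thesis
      using m_le[OF x] True t by simp
  next
    case False
    then have "t * m \<le> (t - 1) * g0 + real_of_ereal (g x)"
      using radial_lower_bound[OF x0 x] m_le t unfolding g0_def by simp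
    moreover have "t * (- \<bar>m\<bar>) \<le> t * m" and "(t - 1) * g0 \<le> (t - 1) * \<bar>g0\<bar>"
      using False by (intro mult_left_mono; simp)+
    ultimately show ?thesis
      by (simp add: C_def algebra_simps)
  qed
  then show ?thesis
    by (intro that[of C]) (auto simp: C_def)
qed

lemma bounded_sublevel_quadratic:
  assumes \<mu>: "\<mu> > 0" and coercive: "\<And>d. \<mu> * (norm d)\<^sup>2 \<le> d \<bullet> (G *v d)"
  shows "bounded {x \<in> edom g. quadratic k0 a c G x + real_of_ereal (g x) \<le> s}"
proof -
  obtain x0 where x0: "x0 \<in> edom g"
    using edom_nonempty by blast
  obtain C where C: "C \<ge> 0" "\<And>x. x \<in> edom g \<Longrightarrow> - C * (1 + norm (x - x0)) \<le> real_of_ereal (g x)"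
    using linear_growth_lower_bound[OF x0] by blast
  define B where "B = s - k0 + C * (1 + norm (c - x0))"
  define R where "R = max 1 (2 * (norm a + C + \<bar>B\<bar>) / \<mu>)"
  have "norm (x - c) \<le> R"
    if x: "x \<in> edom g" "quadratic k0 a c G x + real_of_ereal (g x) \<le> s" for x
  proof -
    define t where "t = norm (x - c)"
    have "norm (x - x0) \<le> t + norm (c - x0)"
      using norm_triangle_ineq[of "x - c" "c - x0"] by (simp add: t_def)
    then have "C * norm (x - x0) \<le> C * t + C * norm (c - x0)"
      using C(1) by (metis distrib_left mult_left_mono)
    moreover have "- C - C * norm (x - x0) \<le> real_of_ereal (g x)"
      using C(2)[OF x(1)] by (simp add: algebra_simps)
    moreover have "k0 - norm a * t + \<mu> / 2 * t\<^sup>2 \<le> quadratic k0 a c G x"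
      unfolding t_def by (rule quadratic_lower_bound[OF coercive])
    ultimately have "\<mu> / 2 * t\<^sup>2 \<le> (norm a + C) * t + B"
      using x(2) unfolding B_def by (simp add: algebra_simps)
    then show ?thesis
      unfolding R_def t_def using C(1) by (intro quadratic_growth_bound[OF \<mu>]) auto
  qed
  then have "{x \<in> edom g. quadratic k0 a c G x + real_of_ereal (g x) \<le> s} \<subseteq> cball c R"
    by (auto simp: dist_norm norm_minus_commute)
  then show ?thesis
    using bounded_subset bounded_cball by blast
qed

lemma closed_sublevel_quadratic:
  "closed {x \<in> edom g. quadratic k0 a c G x + real_of_ereal (g x) \<le> s}" (is "closed ?K")
  unfolding closed_sequential_limits
proof (intro allI impI, elim conjE)
  let ?q = "quadratic k0 a c G"
  fix X l assume XK: "\<forall>n. X n \<in> ?K" and lim: "X \<longlonglongrightarrow> l"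
  have q_lim: "(\<lambda>n. ?q (X n)) \<longlonglongrightarrow> ?q l"
    using continuous_on_tendsto_compose[OF continuous_on_quadratic[of UNIV] lim] by simp
  have le: "g (X n) \<le> ereal (s - ?q (X n))" for n
  proof -
    have "X n \<in> edom g" and "?q (X n) + real_of_ereal (g (X n)) \<le> s"
      using XK by auto
    then show ?thesis
      by (subst real_on_edom) auto
  qed
  have "g l \<le> liminf (\<lambda>n. g (X n))"
    using lsc lim unfolding lsc_def by blast
  also have "\<dots> \<le> liminf (\<lambda>n. ereal (s - ?q (X n)))"
    by (intro Liminf_mono) (simp add: le)
  also have "\<dots> = ereal (s - ?q l)"
    by (intro lim_imp_Liminf) (auto intro!: tendsto_intros q_lim)
  finally have gl: "g l \<le> ereal (s - ?q l)" .
  then have l: "l \<in> edom g"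
    unfolding edom_def by (cases "g l") auto
  with gl show "l \<in> ?K"
    by (subst (asm) real_on_edom[OF l]) simp
qed

lemma quadratic_plus_has_min:
  assumes \<mu>: "\<mu> > 0" and coercive: "\<And>d. \<mu> * (norm d)\<^sup>2 \<le> d \<bullet> (G *v d)"
  obtains xb where "\<And>z. ereal (quadratic k0 a c G xb) + g xb \<le> ereal (quadratic k0 a c G z) + g z"
proof -
  let ?q = "quadratic k0 a c G"
  let ?\<phi> = "\<lambda>x. ?q x + real_of_ereal (g x)"
  obtain x0 where x0: "x0 \<in> edom g"
    using edom_nonempty by blast
  define K where "K = {x \<in> edom g. ?\<phi> x \<le> ?\<phi> x0}"
  have "compact K"
    unfolding K_def compact_eq_bounded_closed
    using bounded_sublevel_quadratic[OF \<mu> coercive] closed_sublevel_quadratic by blast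
  moreover have x0K: "x0 \<in> K"
    using x0 by (simp add: K_def)
  moreover have "continuous_on K ?\<phi>"
    unfolding K_def
    by (intro continuous_intros continuous_on_quadratic continuous_on_subset[OF continuous_on_edom]) auto
  ultimately obtain xb where xb: "xb \<in> K" "\<And>y. y \<in> K \<Longrightarrow> ?\<phi> xb \<le> ?\<phi> y"
    using continuous_attains_inf[of K ?\<phi>] by blast
  show ?thesis
  proof (rule that)
    fix z
    show "ereal (?q xb) + g xb \<le> ereal (?q z) + g z"
    proof (cases "z \<in> edom g")
      case True
      have "?\<phi> xb \<le> ?\<phi> z"
      proof (cases "z \<in> K")
        case False
        with True have "?\<phi> x0 < ?\<phi> z"
          by (simp add: K_def)
        with xb(2)[OF x0K] show ?thesis
          by linarith
      qed (rule xb(2))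
      then show ?thesis
        using True xb(1) by (simp add: K_def plus_on_edom)
    qed (simp add: infinite_off_edom)
  qed
qed

lemma quadratic_plus_min_in_edom:
  assumes min: "\<And>z. ereal (quadratic k0 a c G xb) + g xb \<le> ereal (quadratic k0 a c G z) + g z"
  shows "xb \<in> edom g"
proof (rule ccontr)
  assume "xb \<notin> edom g"
  then have "ereal (quadratic k0 a c G xb) + g xb = \<infinity>"
    by (simp add: infinite_off_edom)
  moreover obtain x0 where "x0 \<in> edom g"
    using edom_nonempty by blast
  ultimately show False
    using min[of x0] by (simp add: plus_on_edom)
qed

lemma quadratic_plus_min_variational_ineq:
  assumes symG: "Finite_Cartesian_Product.transpose G = G"
    and min: "\<And>z. ereal (quadratic k0 a c G xb) + g xb \<le> ereal (quadratic k0 a c G z) + g z"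
    and z: "z \<in> edom g"
  shows "real_of_ereal (g xb) - real_of_ereal (g z) \<le> (a + G *v (xb - c)) \<bullet> (z - xb)"
proof -
  let ?q = "quadratic k0 a c G"
  have xb: "xb \<in> edom g"
    using min by (rule quadratic_plus_min_in_edom)
  define v where "v = z - xb"
  define \<delta> where "\<delta> = real_of_ereal (g xb) - real_of_ereal (g z) - (a + G *v (xb - c)) \<bullet> v"
  have "\<delta> \<le> t * (v \<bullet> (G *v v) / 2)" if t: "0 < t" "t \<le> 1" for t
  proof -
    have xt: "(1 - t) *\<^sub>R xb + t *\<^sub>R z = xb + t *\<^sub>R v"
      by (simp add: v_def algebra_simps)
    have "xb + t *\<^sub>R v \<in> edom g"
      unfolding xt[symmetric] using t by (intro convexD[OF convex_edom xb z]) auto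
    then have "?q xb + real_of_ereal (g xb) \<le> ?q (xb + t *\<^sub>R v) + real_of_ereal (g (xb + t *\<^sub>R v))"
      using min[of "xb + t *\<^sub>R v"] xb by (simp add: plus_on_edom)
    moreover have "real_of_ereal (g (xb + t *\<^sub>R v)) \<le> (1 - t) * real_of_ereal (g xb) + t * real_of_ereal (g z)"
      unfolding xt[symmetric] using t xb z by (intro convex_onD[OF convex_on_edom]) auto
    moreover have "?q (xb + t *\<^sub>R v) - ?q xb = t * ((a + G *v (xb - c)) \<bullet> v) + t\<^sup>2 / 2 * (v \<bullet> (G *v v))"
      by (rule quadratic_increment[OF symG])
    ultimately have "t * \<delta> \<le> t * (t * (v \<bullet> (G *v v) / 2))"
      unfolding \<delta>_def by (simp add: algebra_simps power2_eq_square)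
    then show ?thesis
      using t by simp
  qed
  then have "\<delta> \<le> 0"
    by (rule le_0_if_le_mult_near_0)
  then show ?thesis
    by (simp add: \<delta>_def v_def)
qed

lemma quadratic_plus_min_eq:
  assumes symG: "Finite_Cartesian_Product.transpose G = G"
    and \<mu>: "\<mu> > 0" and coercive: "\<And>d. \<mu> * (norm d)\<^sup>2 \<le> d \<bullet> (G *v d)"
    and min1: "\<And>z. ereal (quadratic k0 a c G x1) + g x1 \<le> ereal (quadratic k0 a c G z) + g z"
    and min2: "\<And>z. ereal (quadratic k0 a c G x2) + g x2 \<le> ereal (quadratic k0 a c G z) + g z"
  shows "x1 = x2"
proof -
  have "real_of_ereal (g x1) - real_of_ereal (g x2) \<le> (a + G *v (x1 - c)) \<bullet> (x2 - x1)"
    using quadratic_plus_min_variational_ineq[OF symG min1 quadratic_plus_min_in_edom[OF min2]] .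
  moreover have "real_of_ereal (g x2) - real_of_ereal (g x1) \<le> (a + G *v (x2 - c)) \<bullet> (x1 - x2)"
    using quadratic_plus_min_variational_ineq[OF symG min2 quadratic_plus_min_in_edom[OF min1]] .
  moreover have "(a + G *v (x1 - c)) \<bullet> (x2 - x1) + (a + G *v (x2 - c)) \<bullet> (x1 - x2)
      = - ((x1 - x2) \<bullet> (G *v (x1 - x2)))"
    by (simp add: inner_diff_left inner_diff_right inner_add_left inner_commute algebra_simps)
  ultimately have "\<mu> * (norm (x1 - x2))\<^sup>2 \<le> 0"
    using coercive[of "x1 - x2"] by linarith
  then show ?thesis
    using \<mu> by (simp add: mult_le_0_iff)
qed

lemma quadratic_plus_ex1_min:
  assumes symG: "Finite_Cartesian_Product.transpose G = G"
    and \<mu>: "\<mu> > 0" and coercive: "\<And>d. \<mu> * (norm d)\<^sup>2 \<le> d \<bullet> (G *v d)"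
  shows "\<exists>!xb. \<forall>z. ereal (quadratic k0 a c G xb) + g xb \<le> ereal (quadratic k0 a c G z) + g z"
proof -
  obtain xb where "\<And>z. ereal (quadratic k0 a c G xb) + g xb \<le> ereal (quadratic k0 a c G z) + g z"
    using quadratic_plus_has_min[OF \<mu> coercive] by blast
  then show ?thesis
    using quadratic_plus_min_eq[OF symG \<mu> coercive] by blast
qed

lemma prox_minimizes:
  "ereal (1/2 * (norm (prox g w - w))\<^sup>2) + g (prox g w) \<le> ereal (1/2 * (norm (z - w))\<^sup>2) + g z"
proof -
  have "\<exists>!p. \<forall>z. ereal (quadratic 0 0 w (mat 1) p) + g p \<le> ereal (quadratic 0 0 w (mat 1) z) + g z"
    by (rule quadratic_plus_ex1_min[of _ 1]) (simp_all add: power2_norm_eq_inner)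
  then show ?thesis
    unfolding prox_def quadratic_identity_matrix by (rule theI'[THEN spec])
qed

lemma inexact_prox_distance_to_min:
  assumes symG: "Finite_Cartesian_Product.transpose G = G"
    and \<mu>: "\<mu> > 0" and coercive: "\<And>d. \<mu> * (norm d)\<^sup>2 \<le> d \<bullet> (G *v d)"
    and min: "\<And>z. ereal (quadratic k0 a c G xb) + g xb \<le> ereal (quadratic k0 a c G z) + g z"
  shows "\<mu> * norm (y - xb) \<le> (1 + spec_norm G) * norm (y - prox g (y - a - G *v (y - c)))"
proof -
  define w where "w = y - a - G *v (y - c)"
  define p where "p = prox g w"
  define e where "e = y - p"
  define d where "d = y - xb"
  have p_min: "\<And>z. ereal (quadratic 0 0 w (mat 1) p) + g p \<le> ereal (quadratic 0 0 w (mat 1) z) + g z"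
    unfolding p_def quadratic_identity_matrix by (rule prox_minimizes)
  have "real_of_ereal (g xb) - real_of_ereal (g p) \<le> (a + G *v (xb - c)) \<bullet> (p - xb)"
    using quadratic_plus_min_variational_ineq[OF symG min quadratic_plus_min_in_edom[OF p_min]] .
  moreover have "real_of_ereal (g p) - real_of_ereal (g xb) \<le> (0 + mat 1 *v (p - w)) \<bullet> (xb - p)"
    using quadratic_plus_min_variational_ineq[OF transpose_mat p_min quadratic_plus_min_in_edom[OF min]] .
  moreover have "(a + G *v (xb - c)) \<bullet> (p - xb) + (0 + mat 1 *v (p - w)) \<bullet> (xb - p)
      = e \<bullet> d - e \<bullet> e - (G *v d) \<bullet> d + (G *v d) \<bullet> e"
  proof -
    have "xb - c = (y - c) - d" "p - w = a + G *v (y - c) - e" "p - xb = d - e" "xb - p = e - d"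
      by (simp_all add: w_def e_def d_def)
    then show ?thesis
      by (simp only:) (simp add: matrix_vector_mult_diff_distrib inner_diff_left inner_diff_right
          inner_add_left inner_add_right inner_commute algebra_simps)
  qed
  ultimately have "d \<bullet> (G *v d) \<le> e \<bullet> d + (G *v d) \<bullet> e"
    using inner_ge_zero[of e] inner_commute[of d "G *v d"] by linarith
  also have "\<dots> \<le> norm e * norm d + spec_norm G * norm d * norm e"
  proof -
    have "norm (G *v d) \<le> spec_norm G * norm d"
      unfolding spec_norm_def by (rule onorm[OF matrix_vector_mul_bounded_linear])
    then show ?thesis
      using Cauchy_Schwarz_ineq2[of e d] Cauchy_Schwarz_ineq2[of "G *v d" e]
      by (smt (verit) mult_right_mono norm_ge_zero)
  qed
  finally have "norm d * (\<mu> * norm d) \<le> norm d * ((1 + spec_norm G) * norm e)"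
    using coercive[of d] by (simp add: power2_eq_square algebra_simps)
  then have "\<mu> * norm d \<le> (1 + spec_norm G) * norm e"
    using spec_norm_nonneg[of G] by (cases "d = 0") auto
  then show ?thesis
    by (simp add: d_def e_def p_def w_def)
qed

end

section \<open>The iteration\<close>

lemma generated_seq_in_edom:
  assumes "convex (edom g)" and gen: "generated_seq A b psi g a1 a2 \<rho> \<tau> \<eta> \<beta> \<sigma> x y"
    and \<beta>: "0 < \<beta>" "\<beta> < 1"
  shows "x k \<in> edom g"
proof (induction k)
  case 0
  then show ?case
    using gen unfolding generated_seq_def by blast
next
  case (Suc k)
  have y: "y k \<in> edom g"
    using gen unfolding generated_seq_def by blast
  obtain m :: nat where "x (Suc k) = y k \<or> x (Suc k) = x k + (\<beta> ^ m) *\<^sub>R (y k - x k)"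
    using gen unfolding generated_seq_def Let_def by (metis (no_types, lifting))
  moreover have "x k + (\<beta> ^ m) *\<^sub>R (y k - x k) = (1 - \<beta> ^ m) *\<^sub>R x k + (\<beta> ^ m) *\<^sub>R y k"
    by (simp add: algebra_simps)
  moreover have "\<dots> \<in> edom g"
    using \<beta> by (intro convexD[OF assms(1) Suc y]) (auto intro: power_le_one)
  ultimately show ?case
    using y by metis
qed

lemma hess_freal:
  assumes U: "open U" "xk \<in> U"
    and C2: "C2_on ((\<lambda>x. A *v x - b) ` U) (\<lambda>u. real_of_ereal (psi u))"
  defines "H \<equiv> hess (\<lambda>u. real_of_ereal (psi u)) (A *v xk - b)"
  shows "hess (freal A b psi) xk = Finite_Cartesian_Product.transpose A ** H ** A"
    and "Finite_Cartesian_Product.transpose H = H"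
proof -
  have dgrad: "(\<lambda>u. grad (\<lambda>u. real_of_ereal (psi u)) u $ i) differentiable (at (A *v xk - b))" for i
    using C2 U(2) unfolding C2_on_def by blast
  have dh: "(\<lambda>u. real_of_ereal (psi u)) differentiable (at (A *v x - b))" if "x \<in> U" for x
    using C2 that unfolding C2_on_def by blast
  have "freal A b psi = (\<lambda>x. real_of_ereal (psi (A *v x - b)))"
    by (simp add: fun_eq_iff freal_def)
  then show "hess (freal A b psi) xk = Finite_Cartesian_Product.transpose A ** H ** A"
    unfolding H_def using hess_affine_comp[where h = "\<lambda>u. real_of_ereal (psi u)", OF U dh dgrad] by simp
  show "Finite_Cartesian_Product.transpose H = H"
    unfolding H_def by (rule hess_symmetric[OF dgrad])
qed

lemma Gmat_eq:
  assumes U: "open U" "xk \<in> U"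
    and C2: "C2_on ((\<lambda>x. A *v x - b) ` U) (\<lambda>u. real_of_ereal (psi u))"
  defines "H \<equiv> hess (\<lambda>u. real_of_ereal (psi u)) (A *v xk - b)"
  shows "Gmat A b psi g a1 a2 \<rho> xk = Finite_Cartesian_Product.transpose A ** H ** A
    + (a1 * max 0 (- lambda_min H)) *\<^sub>R (Finite_Cartesian_Product.transpose A ** A)
    + mu A b psi g a2 \<rho> xk *\<^sub>R mat 1"
  unfolding Gmat_def hess_freal(1)[OF U C2] H_def ..

lemma Gmat_symmetric:
  assumes U: "open U" "xk \<in> U"
    and C2: "C2_on ((\<lambda>x. A *v x - b) ` U) (\<lambda>u. real_of_ereal (psi u))"
  shows "Finite_Cartesian_Product.transpose (Gmat A b psi g a1 a2 \<rho> xk) = Gmat A b psi g a1 a2 \<rho> xk"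
  unfolding Gmat_eq[OF U C2] transpose_add_matrix transpose_scalar matrix_transpose_mul
    transpose_transpose transpose_mat hess_freal(2)[OF U C2]
  by (simp add: matrix_mul_assoc)

lemma Gmat_coercive:
  assumes U: "open U" "xk \<in> U"
    and C2: "C2_on ((\<lambda>x. A *v x - b) ` U) (\<lambda>u. real_of_ereal (psi u))"
    and a1: "a1 \<ge> 1"
  shows "mu A b psi g a2 \<rho> xk * (norm d)\<^sup>2 \<le> d \<bullet> (Gmat A b psi g a1 a2 \<rho> xk *v d)"
proof -
  define H where "H = hess (\<lambda>u. real_of_ereal (psi u)) (A *v xk - b)"
  define c where "c = a1 * max 0 (- lambda_min H)"
  have tA: "d \<bullet> (v v* A) = (A *v d) \<bullet> v" for v
    by (metis dot_lmul_matrix inner_commute)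
  have "d \<bullet> (Gmat A b psi g a1 a2 \<rho> xk *v d)
      = (A *v d) \<bullet> (H *v (A *v d)) + c * (norm (A *v d))\<^sup>2 + mu A b psi g a2 \<rho> xk * (norm d)\<^sup>2"
    unfolding Gmat_eq[OF U C2] H_def[symmetric] c_def[symmetric]
    by (simp add: matrix_vector_mult_add_rdistrib scaleR_matrix_vector_assoc[symmetric]
        matrix_vector_mul_assoc[symmetric] tA inner_add_right power2_norm_eq_inner)
  moreover have "lambda_min H * (norm (A *v d))\<^sup>2 \<le> (A *v d) \<bullet> (H *v (A *v d))"
    by (rule lambda_min_le_quadratic_form[OF hess_freal(2)[OF U C2, folded H_def]])
  moreover have "0 \<le> (lambda_min H + c) * (norm (A *v d))\<^sup>2"
  proof -
    have "max 0 (- lambda_min H) \<le> c"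
      using a1 by (simp add: c_def mult_le_cancel_right1)
    then show ?thesis
      by simp
  qed
  ultimately show ?thesis
    by (simp add: algebra_simps)
qed

lemma Theta_eq_quadratic:
  "Theta A b psi g a1 a2 \<rho> xk z = ereal (quadratic (freal A b psi xk) (grad (freal A b psi) xk) xk
    (Gmat A b psi g a1 a2 \<rho> xk) z) + g z"
  by (simp add: Theta_def quadratic_def)

lemma generated_seq_rk_le:
  assumes "generated_seq A b psi g a1 a2 \<rho> \<tau> \<eta> \<beta> \<sigma> x y" and "0 \<le> \<eta>"
  shows "rk A b psi g a1 a2 \<rho> (x k) (y k) \<le> \<eta> * resid A b psi g (x k) powr (1 + \<tau>)"
  using assms unfolding generated_seq_def by (meson min.cobounded2 mult_left_mono order_trans)

lemma powr_rescaled_bound: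
  fixes D E K :: real
  assumes "0 < a" "0 < r" "0 \<le> K" "a * r powr \<rho> * D \<le> K * E" "E \<le> \<eta> * r powr (1 + \<tau>)"
  shows "D \<le> inverse a * \<eta> * K * r powr (1 + \<tau> - \<rho>)"
proof -
  have "a * r powr \<rho> * D \<le> K * (\<eta> * r powr (1 + \<tau>))"
    using assms(3-5) by (meson mult_left_mono order_trans)
  then have "D \<le> K * (\<eta> * r powr (1 + \<tau>)) / (a * r powr \<rho>)"
    using assms(1,2) by (simp add: field_simps)
  also have "\<dots> = inverse a * \<eta> * K * r powr (1 + \<tau> - \<rho>)"
    using assms(1,2) by (simp add: powr_diff field_simps)
  finally show ?thesis .
qed

theorem lemma4p4:
  fixes A :: "real^'n^'m" and b :: "real^'m"
    and psi :: "real^'m \<Rightarrow> ereal" and g :: "real^'n \<Rightarrow> ereal"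
    and U :: "(real^'n) set"
    and a1 a2 \<rho> \<tau> \<eta> \<beta> \<sigma> :: real
    and x y :: "nat \<Rightarrow> real^'n" and k :: nat
  assumes psi_proper: "proper psi" and psi_lsc: "lsc psi"
    and g_proper: "proper g" and g_lsc: "lsc g"
    and O_open: "open U" and dom_sub: "edom g \<subseteq> U"
    and psi_C2: "C2_on ((\<lambda>x. A *v x - b) ` U) (\<lambda>u. real_of_ereal (psi u))"
    and g_convex: "convex (edom g)" "convex_on (edom g) (\<lambda>x. real_of_ereal (g x))"
    and g_cont: "continuous_on (edom g) (\<lambda>x. real_of_ereal (g x))"
    and F_inf: "(INF z. Fobj A b psi g z) > -\<infinity>"
    and F_lvlbd: "\<forall>c. bounded {z. Fobj A b psi g z \<le> ereal c}"
    and a1: "a1 \<ge> 1" and a2: "a2 > 0"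
    and rho: "0 < \<rho>" "\<rho> < 1" and tau: "\<tau> \<ge> \<rho>"
    and eta: "0 < \<eta>" "\<eta> < 1" and beta: "0 < \<beta>" "\<beta> < 1"
    and sigma: "0 < \<sigma>" "\<sigma> < 1"
    and gen: "generated_seq A b psi g a1 a2 \<rho> \<tau> \<eta> \<beta> \<sigma> x y"
  shows "(\<exists>!xb. \<forall>z. Theta A b psi g a1 a2 \<rho> (x k) xb \<le> Theta A b psi g a1 a2 \<rho> (x k) z)
       \<and> (\<forall>xb. (\<forall>z. Theta A b psi g a1 a2 \<rho> (x k) xb \<le> Theta A b psi g a1 a2 \<rho> (x k) z) \<longrightarrow>
             norm (y k - xb) \<le> inverse a2 * \<eta> * (1 + spec_norm (Gmat A b psi g a1 a2 \<rho> (x k)))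
                               * (resid A b psi g (x k)) powr (1 + \<tau> - \<rho>))"
proof -
  interpret convex_regularizer g
    using g_proper g_lsc g_convex g_cont by unfold_locales
  have xk: "x k \<in> U"
    using generated_seq_in_edom[OF g_convex(1) gen beta] dom_sub by blast
  define G where "G = Gmat A b psi g a1 a2 \<rho> (x k)"
  define q where "q = quadratic (freal A b psi (x k)) (grad (freal A b psi) (x k)) (x k) G"
  have r: "resid A b psi g (x k) > 0"
    using gen unfolding generated_seq_def by blast
  then have \<mu>: "mu A b psi g a2 \<rho> (x k) > 0"
    using a2 by (simp add: mu_def)
  have symG: "Finite_Cartesian_Product.transpose G = G"
    and coercive: "\<And>d. mu A b psi g a2 \<rho> (x k) * (norm d)\<^sup>2 \<le> d \<bullet> (G *v d)"
    unfolding G_def by (rule Gmat_symmetric[OF O_open xk psi_C2], rule Gmat_coercive[OF O_open xk psi_C2 a1])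
  show ?thesis
    unfolding Theta_eq_quadratic G_def[symmetric] q_def[symmetric]
  proof (intro conjI allI impI)
    show "\<exists>!xb. \<forall>z. ereal (q xb) + g xb \<le> ereal (q z) + g z"
      unfolding q_def by (rule quadratic_plus_ex1_min[OF symG \<mu> coercive])
    fix xb assume "\<forall>z. ereal (q xb) + g xb \<le> ereal (q z) + g z"
    then have "mu A b psi g a2 \<rho> (x k) * norm (y k - xb) \<le> (1 + spec_norm G) * rk A b psi g a1 a2 \<rho> (x k) (y k)"
      unfolding rk_def q_def G_def[symmetric] by (intro inexact_prox_distance_to_min[OF symG \<mu> coercive]) blast
    then show "norm (y k - xb) \<le> inverse a2 * \<eta> * (1 + spec_norm G) * resid A b psi g (x k) powr (1 + \<tau> - \<rho>)"
      using a2 r eta spec_norm_nonneg[of G] generated_seq_rk_le[OF gen]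
      by (intro powr_rescaled_bound) (auto simp: mu_def)
  qed
qed

end
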